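(* Let $0<q<1$, let $z\in\mathbb{C}$ with $\Re z>0$, and put $\delta=\frac{2\pi i}{\log q}$. The $q$-Hurwitz zeta-function $$\zeta(s,z:q)=\sum_{k=0}^{\infty}\frac{q^{s(k+1)}}{[k+z]_q^{\,s}},\qquad [x]_q=\frac{1-q^x}{1-q},$$ which is holomorphic for $\Re s>0$, has a meromorphic continuation to the whole $s$-plane. Its poles are exactly the points $s=-r+\delta l$ with $r\in\mathbb{Z}_{\ge 0}$, $l\in\mathbb{Z}$, and all of them are simple. The Laurent expansion at $s=0$ is $$\zeta(s,z:q)=\frac{\alpha_{-1}}{s}+\alpha_0+s\Big\{\alpha_1-\log\prod_{k=1}^{\infty}(1-q^{z-1+k})\Big\}+O(s^2),$$ where $$\alpha_{-1}=-\frac{1}{\log q},\qquad \alpha_0=\frac12-\frac{\log(q-q^2)}{\log q},\qquad \alpha_1=-\frac{1}{12}\log q+\frac12\log(q-q^2)-\frac12\frac{(\log(q-q^2))^2}{\log q}.$$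
   Context: Complex powers are defined with the principal branch of the logarithm: $q^{s(k+1)}=e^{s(k+1)\log q}$ and $[k+z]_q^{\,s}=e^{s\log[k+z]_q}$. The defining series converges absolutely for $\Re s>0$. *)

theory Defs
  imports "HOL-Complex_Analysis.Complex_Analysis" "HOL-Library.Landau_Symbols"
begin

definition qnum :: "real \<Rightarrow> complex \<Rightarrow> complex" where
  "qnum q x = (1 - exp (x * of_real (ln q))) / (1 - of_real q)"

definition qhz_term :: "real \<Rightarrow> complex \<Rightarrow> complex \<Rightarrow> nat \<Rightarrow> complex" where
  "qhz_term q z s k = exp (s * of_nat (k + 1) * of_real (ln q)) / exp (s * Ln (qnum q (of_nat k + z)))"

text \<open>The q-Hurwitz zeta function (series definition, meaningful for Re s > 0).\<close>
definition qHurwitz_zeta :: "real \<Rightarrow> complex \<Rightarrow> complex \<Rightarrow> complex" where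
  "qHurwitz_zeta q z s = (\<Sum>k. qhz_term q z s k)"

end

theory Submission
  imports Defs
begin

(* For Re s > 0 write [k+z]_q^(-s) = (1-q)^s (1 - q^(k+z))^(-s), expand the second factor by the
   binomial series and sum the resulting geometric series over k.  This gives
     zeta(s,z:q) = q^s (1-q)^s * sum_m (s)_m/m! * q^(m z) / (1 - q^(s+m)),
   a series that converges locally uniformly in the whole plane away from the zeros -m + delta l
   of its denominators.  Each such point is a simple zero of exactly one denominator, and the
   Pochhammer symbol (s)_m does not vanish there, so all poles are simple.  Near s = 0 the term
   m = 0, i.e. q^s (1-q)^s / (1 - q^s), produces alpha_-1, alpha_0, alpha_1, while the remaining
   terms vanish at 0 with derivative sum_m q^(m z) / (m (1 - q^m)) = - sum_k log (1 - q^(z+k)). *)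

lemma norm_pochhammer_le:
  fixes s :: "'a :: real_normed_field"
  assumes "norm s \<le> R"
  shows "norm (pochhammer s n) \<le> pochhammer R n"
proof (induction n)
  case (Suc n)
  have "norm (pochhammer s (Suc n)) = norm (pochhammer s n) * norm (s + of_nat n)"
    by (simp add: pochhammer_Suc norm_mult)
  also have "\<dots> \<le> pochhammer R n * (R + of_nat n)"
    using Suc assms norm_triangle_ineq[of s "of_nat n"]
    by (intro mult_mono) (auto intro: order_trans[OF norm_ge_zero])
  finally show ?case by (simp add: pochhammer_Suc)
qed simp

lemma gbinomial_minus_mult_power:
  fixes a x :: "'a :: field_char_0"
  shows "((- a) gchoose n) * (- x) ^ n = pochhammer a n / fact n * x ^ n"
proof -
  have "((- a) gchoose n) * (- x) ^ n = ((-1) ^ n * (-1) ^ n) * (pochhammer a n / fact n * x ^ n)"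
    by (simp add: gbinomial_pochhammer power_minus[of x])
  also have "(-1 :: 'a) ^ n * (-1) ^ n = 1"
    by (simp flip: power_add)
  finally show ?thesis by simp
qed

lemma summable_pochhammer_power:
  fixes R x :: real
  assumes "\<bar>x\<bar> < 1"
  shows "summable (\<lambda>n. pochhammer R n / fact n * x ^ n)"
proof -
  have "\<bar>-x\<bar> < 1" using assms by simp
  from sums_summable[OF gen_binomial_real[OF this, of "- R"]] show ?thesis
    by (simp add: gbinomial_minus_mult_power)
qed

lemma sums_swap_of_product_bound:
  fixes f :: "nat \<Rightarrow> nat \<Rightarrow> 'a :: {banach, second_countable_topology}"
  assumes bound: "\<And>m k. norm (f m k) \<le> a m * b k"
    and a: "summable a" "\<And>m. 0 \<le> a m" and b: "summable b" "\<And>k. 0 \<le> b k"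
    and rows: "\<And>m. (\<lambda>k. f m k) sums g m" and cols: "\<And>k. (\<lambda>m. f m k) sums h k"
  shows "\<exists>S. g sums S \<and> h sums S"
proof -
  have "((\<lambda>k. a m * b k) has_sum a m * suminf b) UNIV" for m
    using a b by (intro sums_nonneg_imp_has_sum sums_mult summable_sums) auto
  moreover have "(\<lambda>m. a m * suminf b) summable_on UNIV"
    using a b by (simp add: summable_on_UNIV_nonneg_real_iff suminf_nonneg summable_mult2)
  ultimately have "(\<lambda>(m, k). a m * b k) summable_on UNIV \<times> UNIV"
    using a b by (intro summable_on_SigmaI[where g = "\<lambda>m. a m * suminf b"]) auto
  hence "(\<lambda>x. norm (case x of (m, k) \<Rightarrow> f m k)) summable_on UNIV \<times> UNIV"
    by (rule Infinite_Sum.abs_summable_on_comparison_test') (auto simp: bound)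
  then obtain S where S: "((\<lambda>(m, k). f m k) has_sum S) (UNIV \<times> UNIV)"
    using Infinite_Sum.abs_summable_summable summable_on_def by blast
  have rows': "((\<lambda>k. f m k) has_sum g m) UNIV" for m
    by (rule norm_summable_imp_has_sum[OF _ rows],
        rule summable_comparison_test[of _ "\<lambda>k. a m * b k"]) (auto intro: bound summable_mult b)
  have cols': "((\<lambda>m. f m k) has_sum h k) UNIV" for k
    by (rule norm_summable_imp_has_sum[OF _ cols],
        rule summable_comparison_test[of _ "\<lambda>m. a m * b k"]) (auto intro: bound summable_mult2 a)
  have "(g has_sum S) UNIV"
    using S by (rule has_sum_SigmaD) (simp add: rows')
  moreover have "((\<lambda>(k, m). f m k) has_sum S) (UNIV \<times> UNIV)"
    using S by (subst (asm) has_sum_swap) simp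
  hence "(h has_sum S) UNIV"
    by (rule has_sum_SigmaD) (simp add: cols')
  ultimately show ?thesis by (blast dest: has_sum_imp_sums)
qed

lemma isCont_imp_bigo_1:
  fixes g :: "'a :: t2_space \<Rightarrow> 'b :: real_normed_field"
  shows "isCont g x \<Longrightarrow> g \<in> O[at x](\<lambda>_. 1)"
  by (rule bigoI_tendsto[where c = "g x"]) (simp_all add: isCont_def)

lemma bigo_mult_isCont:
  fixes f g h :: "'a :: t2_space \<Rightarrow> 'b :: real_normed_field"
  shows "f \<in> O[at x](h) \<Longrightarrow> isCont g x \<Longrightarrow> (\<lambda>s. f s * g s) \<in> O[at x](h)"
  by (rule landau_o.big_1_mult[OF _ isCont_imp_bigo_1])

lemma powser_in_bigo_power:
  fixes a :: "nat \<Rightarrow> complex"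
  assumes sums: "\<And>s. (\<lambda>n. a n * s ^ n) sums f s" and vanish: "\<And>n. n < k \<Longrightarrow> a n = 0"
  shows "f \<in> O[at 0](\<lambda>s. s ^ k)"
proof -
  define g where "g s = (\<Sum>n. a (n + k) * s ^ n)" for s
  have shifted: "(\<lambda>n. a (n + k) * s ^ (n + k)) sums f s" for s
    using sums_zero_iff_shift[of k "\<lambda>n. a n * s ^ n" "f s"] sums[of s] vanish by simp
  have factored: "(\<lambda>n. s ^ k * (a (n + k) * s ^ n)) sums f s" for s
    using shifted[of s] by (simp add: power_add mult_ac)
  have g_sums: "(\<lambda>n. a (n + k) * s ^ n) sums g s" if "s \<noteq> 0" for s
    using sums_mult[OF factored[of s], of "inverse (s ^ k)"] that
    by (simp add: g_def sums_iff field_simps)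
  have "summable (\<lambda>n. a (n + k) * 1 ^ n)"
    using g_sums[of 1] by (simp add: sums_iff)
  hence "isCont g 0"
    unfolding g_def[abs_def] by (rule isCont_powser) simp
  moreover have "f s = s ^ k * g s" if "s \<noteq> 0" for s
    by (rule sums_unique2[OF factored[of s] sums_mult[OF g_sums[OF that]]])
  hence "\<forall>\<^sub>F s in at 0. f s = s ^ k * g s"
    by (simp add: eventually_at_filter)
  ultimately show ?thesis
    by (simp only: landau_o.big.in_cong bigo_mult_isCont[OF landau_o.big_refl])
qed

lemma exp_remainder_bigo:
  fixes c :: complex
  shows "(\<lambda>s. exp (c * s) - (\<Sum>n<k. c ^ n / fact n * s ^ n)) \<in> O[at 0](\<lambda>s. s ^ k)"
proof (rule powser_in_bigo_power)
  fix s :: complex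
  have exp_sums: "(\<lambda>n. c ^ n / fact n * s ^ n) sums exp (c * s)"
    using exp_converges[of "c * s"]
    by (simp add: power_mult_distrib scaleR_conv_of_real divide_inverse mult_ac)
  have partial_sums:
    "(\<lambda>n. if n < k then c ^ n / fact n * s ^ n else 0) sums (\<Sum>n<k. c ^ n / fact n * s ^ n)"
    using sums_If_finite_set[of "{..<k}" "\<lambda>n. c ^ n / fact n * s ^ n"] by simp
  have eq: "c ^ n / fact n * s ^ n - (if n < k then c ^ n / fact n * s ^ n else 0) =
      (if n < k then 0 else c ^ n / fact n) * s ^ n" for n
    by simp
  show "(\<lambda>n. (if n < k then 0 else c ^ n / fact n) * s ^ n) sums
      (exp (c * s) - (\<Sum>n<k. c ^ n / fact n * s ^ n))"
    using sums_diff[OF exp_sums partial_sums] unfolding eq .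
qed simp

lemma holomorphic_taylor2_bigo:
  assumes "f holomorphic_on ball 0 r" "0 < r"
  shows "(\<lambda>s. f s - f 0 - deriv f 0 * s) \<in> O[at 0](\<lambda>s. s ^ 2)"
proof -
  define g where "g s = (if s = 0 then deriv f 0 else (f s - f 0) / (s - 0))" for s
  have "g holomorphic_on ball 0 r"
    unfolding g_def[abs_def] by (rule pole_lemma_open[OF assms(1)]) simp
  define h where "h s = (if s = 0 then deriv g 0 else (g s - g 0) / (s - 0))" for s
  have "h holomorphic_on ball 0 r"
    unfolding h_def[abs_def] by (rule pole_lemma_open[OF \<open>g holomorphic_on ball 0 r\<close>]) simp
  hence "isCont h 0"
    using assms(2) by (auto intro!: holomorphic_on_imp_continuous_on continuous_on_interior)
  moreover have "\<forall>\<^sub>F s in at 0. f s - f 0 - deriv f 0 * s = s ^ 2 * h s"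
    by (simp add: eventually_at_filter g_def h_def power2_eq_square field_simps)
  ultimately show ?thesis
    by (simp only: landau_o.big.in_cong bigo_mult_isCont[OF landau_o.big_refl])
qed

lemma simple_pole_quotient:
  assumes U: "open U" "p \<in> U"
    and holo: "g holomorphic_on U" "h holomorphic_on U" "k holomorphic_on U"
    and "h p = 0" "deriv h p \<noteq> 0" "g p \<noteq> 0"
    and f_eq: "\<And>w. w \<in> U \<Longrightarrow> w \<noteq> p \<Longrightarrow> f w = g w / h w + k w"
  shows "is_pole f p \<and> zorder f p = -1"
proof -
  define \<phi> where "\<phi> w = (if w = p then deriv h p else (h w - h p) / (w - p))" for w
  have \<phi>_holo: "\<phi> holomorphic_on U"
    unfolding \<phi>_def[abs_def] by (rule pole_lemma_open[OF holo(2) U(1)])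
  have h_eq: "h w = \<phi> w * (w - p)" for w
    using \<open>h p = 0\<close> by (cases "w = p") (simp_all add: \<phi>_def)
  define V where "V = U \<inter> \<phi> -` (- {0})"
  have "open V"
    unfolding V_def
    by (rule continuous_open_preimage[OF holomorphic_on_imp_continuous_on[OF \<phi>_holo] U(1)]) auto
  moreover have "p \<in> V"
    using U(2) \<open>deriv h p \<noteq> 0\<close> by (simp add: V_def \<phi>_def)
  ultimately have V: "open V" "p \<in> V" .
  define G where "G w = g w / \<phi> w + (w - p) * k w" for w
  have G_holo: "G holomorphic_on V"
    unfolding G_def[abs_def] V_def
    by (intro holomorphic_intros holomorphic_on_subset[OF holo(1)] holomorphic_on_subset[OF holo(3)]
        holomorphic_on_subset[OF \<phi>_holo]) auto
  have "G p \<noteq> 0"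
    using \<open>g p \<noteq> 0\<close> \<open>deriv h p \<noteq> 0\<close> by (simp add: G_def \<phi>_def)
  have f_G: "f w = G w * (w - p) powi (-1)" if "w \<in> V" "w \<noteq> p" for w
    using that f_eq[of w] unfolding V_def G_def h_eq
    by (simp add: power_int_minus field_simps)
  have "is_pole (\<lambda>w. G w / (w - p) ^ 1) p"
    by (rule is_pole_basic[OF G_holo V(1,2) \<open>G p \<noteq> 0\<close>]) simp
  moreover have "\<forall>\<^sub>F w in at p. G w / (w - p) ^ 1 = f w"
    using eventually_at_in_open[OF V] by eventually_elim (simp add: f_G power_int_minus divide_inverse)
  ultimately have "is_pole f p"
    by (rule is_pole_transform) simp
  moreover have "zorder f p = -1"
    by (rule zorder_eqI[OF V G_holo \<open>G p \<noteq> 0\<close> f_G])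
  ultimately show ?thesis ..
qed

lemma exp_quotient_numerator_bigo:
  fixes a l :: complex
  assumes "l \<noteq> 0"
  defines "Q \<equiv> \<lambda>s. - 1 / l + (1/2 - a / l) * s + (- l / 12 + a / 2 - a^2 / (2 * l)) * s^2"
  shows "(\<lambda>s. s * exp (a * s) - (1 - exp (l * s)) * Q s) \<in> O[at 0](\<lambda>s. s ^ 4)"
proof -
  define A where "A s = 1 + a * s + a^2 / 2 * s^2" for s
  define L where "L s = 1 + l * s + l^2 / 2 * s^2 + l^3 / 6 * s^3" for s
  have "(\<lambda>s. s * (exp (a * s) - A s)) \<in> O[at 0](\<lambda>s. s * s ^ 3)"
    using exp_remainder_bigo[of a 3] unfolding A_def
    by (intro landau_o.big.mult_left) (simp add: eval_nat_numeral)
  hence rem_a: "(\<lambda>s. s * (exp (a * s) - A s)) \<in> O[at 0](\<lambda>s. s ^ 4)"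
    by (simp add: eval_nat_numeral)
  have "(\<lambda>s. exp (l * s) - L s) \<in> O[at 0](\<lambda>s. s ^ 4)"
    using exp_remainder_bigo[of l 4] unfolding L_def by (simp add: eval_nat_numeral)
  hence rem_l: "(\<lambda>s. (exp (l * s) - L s) * Q s) \<in> O[at 0](\<lambda>s. s ^ 4)"
    by (rule bigo_mult_isCont) (simp add: Q_def)
  define c where "c = l^2 / 2 * (- l / 12 + a / 2 - a^2 / (2 * l)) + l^3 / 6 * (1/2 - a / l)"
  define d where "d = l^3 / 6 * (- l / 12 + a / 2 - a^2 / (2 * l))"
  \<comment> \<open>\<open>Q\<close> is chosen so that the Taylor polynomials of the two sides agree up to order 3\<close>
  have poly: "s * A s - (1 - L s) * Q s = s ^ 4 * (c + d * s)" for s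
    using assms(1) by (simp add: A_def L_def Q_def c_def d_def field_simps eval_nat_numeral)
  have "(\<lambda>s. s ^ 4 * (c + d * s)) \<in> O[at 0](\<lambda>s. s ^ 4)"
    by (intro bigo_mult_isCont[OF landau_o.big_refl] continuous_intros)
  hence "(\<lambda>s. s * (exp (a * s) - A s) + (exp (l * s) - L s) * Q s + s ^ 4 * (c + d * s))
      \<in> O[at 0](\<lambda>s. s ^ 4)"
    using sum_in_bigo(1)[OF sum_in_bigo(1)[OF rem_a rem_l]] by blast
  moreover have "s * (exp (a * s) - A s) + (exp (l * s) - L s) * Q s + s ^ 4 * (c + d * s) =
      s * exp (a * s) - (1 - exp (l * s)) * Q s" for s
    unfolding poly[symmetric] by (simp add: algebra_simps)
  ultimately show ?thesis by (simp only:)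
qed

lemma exp_quotient_laurent_bigo:
  fixes a l :: complex
  assumes "l \<noteq> 0"
  shows "(\<lambda>s. exp (a * s) / (1 - exp (l * s)) -
      (- 1 / (l * s) + (1/2 - a / l) + (- l / 12 + a / 2 - a^2 / (2 * l)) * s)) \<in> O[at 0](\<lambda>s. s ^ 2)"
proof -
  define Q where "Q s = - 1 / l + (1/2 - a / l) * s + (- l / 12 + a / 2 - a^2 / (2 * l)) * s^2" for s
  define N where "N s = s * exp (a * s) - (1 - exp (l * s)) * Q s" for s
  define D where "D s = (1 - exp (l * s)) / s" for s
  have "((\<lambda>s. 1 - exp (l * s)) has_field_derivative - l) (at 0)"
    by (auto intro!: derivative_eq_intros)
  hence D_lim: "(D \<longlongrightarrow> - l) (at 0)"
    by (simp add: has_field_derivative_iff D_def[abs_def])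
  hence "(\<lambda>s. inverse (D s)) \<in> O[at 0](\<lambda>_. 1)"
    using assms by (intro bigoI_tendsto[where c = "- inverse l"]) (auto intro!: tendsto_eq_intros)
  hence "(\<lambda>s. N s * inverse (D s)) \<in> O[at 0](\<lambda>s. s ^ 4)"
    using exp_quotient_numerator_bigo[OF assms, of a] unfolding N_def Q_def[abs_def]
    by (intro landau_o.big_1_mult)
  hence "(\<lambda>s. inverse (s ^ 2) * (N s * inverse (D s))) \<in> O[at 0](\<lambda>s. inverse (s ^ 2) * s ^ 4)"
    by (rule landau_o.big.mult_left)
  also have "(\<lambda>s. inverse (s ^ 2) * s ^ 4) \<in> \<Theta>[at 0](\<lambda>s. s ^ 2)"
    by (intro bigthetaI_cong) (auto simp: eventually_at_filter eval_nat_numeral field_simps)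
  finally show ?thesis
  proof (rule landau_o.big.in_cong[THEN iffD1, rotated])
    have "\<forall>\<^sub>F s in at 0. D s \<noteq> 0"
      using tendsto_imp_eventually_ne[OF D_lim] assms by simp
    moreover have "\<forall>\<^sub>F s in at (0::complex). s \<noteq> 0"
      by (simp add: eventually_at_filter)
    ultimately show "\<forall>\<^sub>F s in at 0. inverse (s ^ 2) * (N s * inverse (D s)) =
        exp (a * s) / (1 - exp (l * s)) -
        (- 1 / (l * s) + (1/2 - a / l) + (- l / 12 + a / 2 - a^2 / (2 * l)) * s)"
      by eventually_elim (use assms in \<open>simp add: N_def D_def Q_def field_simps eval_nat_numeral\<close>)
  qed
qed

locale q_hurwitz =
  fixes q :: real and z :: complex
  assumes q_pos: "0 < q" and q_less_1: "q < 1" and Re_z_pos: "0 < Re z"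
begin

lemma ln_q_neg: "ln q < 0"
  using q_pos q_less_1 by simp

definition qpow :: "complex \<Rightarrow> complex" where
  "qpow w = exp (w * of_real (ln q))"

lemma norm_qpow: "norm (qpow w) = exp (Re w * ln q)"
  by (simp add: qpow_def norm_exp_eq_Re)

lemma qpow_add: "qpow (v + w) = qpow v * qpow w"
  by (simp add: qpow_def distrib_right exp_add)

lemma qpow_of_nat_mult: "qpow (of_nat n * w) = qpow w ^ n"
  by (simp add: qpow_def exp_of_nat_mult[symmetric] mult.assoc)

lemma qpow_of_nat: "qpow (of_nat n) = of_real (q ^ n)"
proof -
  have "qpow 1 = of_real q"
    using q_pos by (simp add: qpow_def exp_of_real)
  thus ?thesis
    using qpow_of_nat_mult[of n 1] by simp
qed

lemma norm_qpow_le: "c \<le> Re w \<Longrightarrow> norm (qpow w) \<le> exp (c * ln q)"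
  using ln_q_neg by (simp add: norm_qpow mult_right_mono_neg)

lemma norm_qpow_less_1: "0 < Re w \<Longrightarrow> norm (qpow w) < 1"
  using ln_q_neg by (simp add: norm_qpow mult_pos_neg)

lemma holomorphic_qpow [holomorphic_intros]:
  "f holomorphic_on A \<Longrightarrow> (\<lambda>s. qpow (f s)) holomorphic_on A"
  unfolding qpow_def by (intro holomorphic_intros)

definition qperiod :: complex where
  "qperiod = 2 * pi * \<i> / of_real (ln q)"

lemma Re_qperiod [simp]: "Re qperiod = 0"
  by (simp add: qperiod_def)

lemma qpow_eq_1_iff: "qpow w = 1 \<longleftrightarrow> (\<exists>l::int. w = qperiod * of_int l)"
proof -
  have "qpow w = 1 \<longleftrightarrow> (\<exists>l::int. w * of_real (ln q) = of_real (2 * pi * of_int l) * \<i>)"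
    using exp_eq[of "w * of_real (ln q)" 0] by (simp add: qpow_def mult_ac)
  also have "\<dots> \<longleftrightarrow> (\<exists>l::int. w = qperiod * of_int l)"
    using ln_q_neg by (simp add: qperiod_def field_simps)
  finally show ?thesis .
qed

definition qhz_poles :: "complex set" where
  "qhz_poles = {s. \<exists>r::nat. \<exists>l::int. s = - of_nat r + qperiod * of_int l}"

lemma qpow_shift_eq_1_iff:
  "qpow (s + of_nat m) = 1 \<longleftrightarrow> (\<exists>l::int. s = - of_nat m + qperiod * of_int l)"
  unfolding qpow_eq_1_iff by (metis add_diff_cancel_right' diff_conv_add_uminus add.commute)

lemma qpow_shift_eq_1_imp_Re: "qpow (s + of_nat m) = 1 \<Longrightarrow> Re s = - real m"
  by (auto simp: qpow_shift_eq_1_iff)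

lemma qpow_shift_ne_1: "s \<notin> qhz_poles \<Longrightarrow> qpow (s + of_nat m) \<noteq> 1"
  unfolding qhz_poles_def qpow_shift_eq_1_iff by blast

lemma uniform_discrete_qhz_poles: "uniform_discrete qhz_poles"
proof -
  have "norm qperiod > 0"
    using ln_q_neg by (simp add: qperiod_def)
  have "p1 = p2"
    if poles: "p1 \<in> qhz_poles" "p2 \<in> qhz_poles" and close: "dist p1 p2 < min 1 (norm qperiod)" for p1 p2
  proof -
    obtain r1 l1 r2 l2
      where p: "p1 = - of_nat r1 + qperiod * of_int l1" "p2 = - of_nat r2 + qperiod * of_int l2"
      using poles unfolding qhz_poles_def by blast
    have "\<bar>Re (p1 - p2)\<bar> < 1"
      using abs_Re_le_cmod[of "p1 - p2"] close by (simp add: dist_norm)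
    hence "r1 = r2"
      by (simp add: p)
    hence "p1 - p2 = qperiod * of_int (l1 - l2)"
      by (simp add: p algebra_simps)
    hence "norm qperiod * \<bar>of_int (l1 - l2)\<bar> < norm qperiod * 1"
      using close by (simp add: dist_norm norm_mult del: of_int_diff)
    hence "l1 = l2"
      using \<open>norm qperiod > 0\<close> by simp
    with \<open>r1 = r2\<close> show ?thesis
      by (simp add: p)
  qed
  thus ?thesis
    using \<open>norm qperiod > 0\<close> unfolding uniform_discrete_def
    by (intro exI[of _ "min 1 (norm qperiod)"]) auto
qed

lemma closed_qhz_poles_Diff: "closed (qhz_poles - A)"
  by (rule uniform_discrete_imp_closed[OF uniform_discrete_subset[OF uniform_discrete_qhz_poles]]) auto

definition qterm :: "nat \<Rightarrow> complex \<Rightarrow> complex" where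
  "qterm m s = pochhammer s m / fact m * qpow (of_nat m * z) / (1 - qpow (s + of_nat m))"

lemma holomorphic_qterm:
  "(\<And>s. s \<in> A \<Longrightarrow> qpow (s + of_nat m) \<noteq> 1) \<Longrightarrow> qterm m holomorphic_on A"
  unfolding qterm_def[abs_def] by (intro holomorphic_intros) auto

lemma norm_qterm_le:
  assumes "s \<in> ball 0 R" "R < real N" "N \<le> m"
  shows "norm (qterm m s) \<le> pochhammer R m / fact m * norm (qpow z) ^ m / (1 - exp ((N - R) * ln q))"
proof -
  have "N - R \<le> Re (s + of_nat m)"
    using assms abs_Re_le_cmod[of s] by simp
  hence "norm (qpow (s + of_nat m)) \<le> exp ((N - R) * ln q)"
    by (rule norm_qpow_le)
  moreover have "exp ((N - R) * ln q) < 1"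
    using assms(2) ln_q_neg by (simp add: mult_pos_neg)
  ultimately have denom: "1 - exp ((N - R) * ln q) \<le> norm (1 - qpow (s + of_nat m))"
      "0 < 1 - exp ((N - R) * ln q)"
    using norm_triangle_ineq2[of 1 "qpow (s + of_nat m)"] by auto
  have numer: "norm (pochhammer s m) \<le> pochhammer R m"
    using assms(1) by (intro norm_pochhammer_le) auto
  have "norm (qterm m s) =
      norm (pochhammer s m) / fact m * norm (qpow z) ^ m / norm (1 - qpow (s + of_nat m))"
    by (simp add: qterm_def norm_mult norm_divide norm_power qpow_of_nat_mult norm_fact)
  also have "\<dots> \<le> pochhammer R m / fact m * norm (qpow z) ^ m / (1 - exp ((N - R) * ln q))"
    using denom numer order_trans[OF norm_ge_zero numer]
    by (intro frac_le mult_right_mono divide_right_mono mult_nonneg_nonneg divide_nonneg_nonneg) auto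
  finally show ?thesis .
qed

definition qtail :: "nat \<Rightarrow> complex \<Rightarrow> complex" where
  "qtail N s = (\<Sum>n. qterm (n + N) s)"

lemma qtail_series:
  assumes "R < real N"
  shows "qtail N holomorphic_on ball 0 R"
    and "s \<in> ball 0 R \<Longrightarrow> (\<lambda>n. qterm (n + N) s) sums qtail N s"
    and "s \<in> ball 0 R \<Longrightarrow> (\<lambda>n. deriv (qterm (n + N)) s) sums deriv (qtail N) s"
proof -
  have holo: "qterm (n + N) holomorphic_on ball 0 R" for n
  proof (rule holomorphic_qterm)
    fix s :: complex assume "s \<in> ball 0 R"
    thus "qpow (s + of_nat (n + N)) \<noteq> 1"
      using assms abs_Re_le_cmod[of s] qpow_shift_eq_1_imp_Re[of s "n + N"] by auto
  qed
  define M where "M n = pochhammer R n / fact n * norm (qpow z) ^ n / (1 - exp ((N - R) * ln q))" for n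
  have "summable M"
    unfolding M_def using norm_qpow_less_1[OF Re_z_pos]
    by (intro summable_divide summable_pochhammer_power) simp
  hence "summable (\<lambda>n. M (n + N))"
    by (simp add: summable_iff_shift)
  moreover have "\<forall>\<^sub>F n in sequentially. \<forall>s\<in>ball 0 R. norm (qterm (n + N) s) \<le> M (n + N)"
    using assms unfolding M_def by (intro always_eventually allI ballI norm_qterm_le) auto
  ultimately obtain g g' where g: "\<forall>s\<in>ball 0 R. ((\<lambda>n. qterm (n + N) s) sums g s) \<and>
      ((\<lambda>n. deriv (qterm (n + N)) s) sums g' s) \<and> (g has_field_derivative g' s) (at s)"
    using series_and_derivative_comparison[of "ball 0 R" "\<lambda>n. M (n + N)" "\<lambda>n. qterm (n + N)"
        "\<lambda>n. deriv (qterm (n + N))"] holomorphic_derivI[OF holo] by auto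
  have g_eq: "qtail N s = g s" if "s \<in> ball 0 R" for s
    using g that unfolding qtail_def by (auto simp: sums_iff)
  have deriv: "(qtail N has_field_derivative g' s) (at s)" if "s \<in> ball 0 R" for s
    using has_field_derivative_transform_within_open[of g "g' s" s "ball 0 R" "qtail N"] g g_eq that
    by auto
  show "qtail N holomorphic_on ball 0 R"
    using deriv by (metis holomorphic_on_open open_ball)
  show "s \<in> ball 0 R \<Longrightarrow> (\<lambda>n. qterm (n + N) s) sums qtail N s"
    using g g_eq by auto
  show "s \<in> ball 0 R \<Longrightarrow> (\<lambda>n. deriv (qterm (n + N)) s) sums deriv (qtail N) s"
    using g deriv DERIV_imp_deriv by fastforce
qed

lemma summable_qterm: "summable (\<lambda>m. qterm m s)"
proof -
  obtain N where "norm s + 1 < real N"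
    using reals_Archimedean2 by blast
  hence "summable (\<lambda>n. qterm (n + N) s)"
    using qtail_series(2)[of "norm s + 1" N s] by (simp add: sums_iff)
  thus ?thesis
    by (rule summable_iff_shift[THEN iffD1])
qed

lemma suminf_qterm_split: "(\<Sum>m. qterm m s) = (\<Sum>m<N. qterm m s) + qtail N s"
  using suminf_split_initial_segment[OF summable_qterm, of s N] by (simp add: qtail_def add.commute)

text \<open>The prefactor \<open>exp (s * ln (q - q\<^sup>2))\<close> is \<open>q\<^sup>s (1 - q)\<^sup>s\<close>.\<close>

definition qzeta :: "complex \<Rightarrow> complex" where
  "qzeta s = exp (s * of_real (ln (q - q^2))) * (\<Sum>m. qterm m s)"

lemma qzeta_split:
  "qzeta s = exp (s * of_real (ln (q - q^2))) * ((\<Sum>m<N. qterm m s) + qtail N s)"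
  by (simp add: qzeta_def suminf_qterm_split)

lemma holomorphic_qzeta: "qzeta holomorphic_on - qhz_poles"
proof -
  have "qzeta holomorphic_on ball 0 R - qhz_poles" for R
  proof -
    obtain N where "R < real N"
      using reals_Archimedean2 by blast
    have "(\<lambda>s. exp (s * of_real (ln (q - q^2))) * ((\<Sum>m<N. qterm m s) + qtail N s))
        holomorphic_on ball 0 R - qhz_poles"
      by (intro holomorphic_intros holomorphic_qterm qpow_shift_ne_1
          holomorphic_on_subset[OF qtail_series(1)[OF \<open>R < real N\<close>]]) auto
    thus ?thesis
      by (rule holomorphic_transform) (simp add: qzeta_split[of _ N])
  qed
  hence "qzeta holomorphic_on (\<Union>R. ball 0 R - qhz_poles)"
    using closed_qhz_poles_Diff[of "{}"] by (intro holomorphic_on_UN_open) auto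
  moreover have "(\<Union>R. ball 0 R - qhz_poles) = - qhz_poles"
    by (auto intro: gt_ex)
  ultimately show ?thesis by simp
qed

lemma deriv_one_minus_qpow: "deriv (\<lambda>s. 1 - qpow (s + c)) w = - qpow (w + c) * of_real (ln q)"
  unfolding qpow_def by (rule DERIV_imp_deriv) (auto intro!: derivative_eq_intros)

lemma qzeta_split_term:
  assumes "r < N"
  shows "qzeta w = exp (w * of_real (ln (q - q^2))) * (pochhammer w r / fact r * qpow (of_nat r * z)) /
      (1 - qpow (w + of_nat r)) +
    exp (w * of_real (ln (q - q^2))) * ((\<Sum>m\<in>{..<N} - {r}. qterm m w) + qtail N w)"
proof -
  have "(\<Sum>m<N. qterm m w) = qterm r w + (\<Sum>m\<in>{..<N} - {r}. qterm m w)"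
    using assms by (simp add: sum.remove)
  thus ?thesis
    by (simp add: qzeta_split[of _ N] qterm_def algebra_simps)
qed

lemma qzeta_simple_pole:
  assumes p: "p = - of_nat r + qperiod * of_int l"
  shows "is_pole qzeta p \<and> zorder qzeta p = -1"
proof -
  define A where "A = ln (q - q^2)"
  define R where "R = norm p + 1"
  obtain N where "R < real N"
    using reals_Archimedean2 by blast
  have Re_p: "Re p = - real r"
    by (simp add: p)
  hence "r < N"
    using abs_Re_le_cmod[of p] \<open>R < real N\<close> by (simp add: R_def)
  define U where "U = ball 0 R - (qhz_poles - {p})"
  have U: "open U" "p \<in> U"
    using closed_qhz_poles_Diff[of "{p}"] by (auto simp: U_def R_def)
  have ne_1: "qpow (s + of_nat m) \<noteq> 1" if "s \<in> U" "m \<noteq> r" for s m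
  proof
    assume "qpow (s + of_nat m) = 1"
    hence "s \<in> qhz_poles" "Re s = - real m"
      by (auto simp: qhz_poles_def qpow_shift_eq_1_iff)
    with that Re_p show False
      by (auto simp: U_def)
  qed
  have root: "qpow (p + of_nat r) = 1"
    using p qpow_shift_eq_1_iff by blast
  have "pochhammer p r \<noteq> 0"
    using Re_p by (auto simp: pochhammer_eq_0_iff)
  show ?thesis
  proof (rule simple_pole_quotient[OF U])
    show "(\<lambda>s. exp (s * of_real A) * (pochhammer s r / fact r * qpow (of_nat r * z)))
        holomorphic_on U"
      by (intro holomorphic_intros) auto
    show "(\<lambda>s. 1 - qpow (s + of_nat r)) holomorphic_on U"
      by (intro holomorphic_intros)
    show "(\<lambda>s. exp (s * of_real A) * ((\<Sum>m\<in>{..<N} - {r}. qterm m s) + qtail N s)) holomorphic_on U"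
      using ne_1 by (intro holomorphic_intros holomorphic_qterm
          holomorphic_on_subset[OF qtail_series(1)[OF \<open>R < real N\<close>]]) (auto simp: U_def)
    show "1 - qpow (p + of_nat r) = 0" "deriv (\<lambda>s. 1 - qpow (s + of_nat r)) p \<noteq> 0"
      using root ln_q_neg by (simp_all add: deriv_one_minus_qpow)
    show "exp (p * of_real A) * (pochhammer p r / fact r * qpow (of_nat r * z)) \<noteq> 0"
      using \<open>pochhammer p r \<noteq> 0\<close> by (simp add: qpow_def)
  qed (simp add: A_def qzeta_split_term[OF \<open>r < N\<close>])
qed

lemma meromorphic_qzeta: "qzeta meromorphic_on UNIV"
proof (rule meromorphic_onI_weak)
  show "qzeta analytic_on UNIV - qhz_poles"
    using holomorphic_qzeta closed_qhz_poles_Diff[of "{}"]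
    by (subst analytic_on_open) (auto simp: open_Diff Compl_eq_Diff_UNIV)
  show "not_essential qzeta p" if "p \<in> qhz_poles" for p
    using that qzeta_simple_pole by (auto simp: qhz_poles_def)
  show "qhz_poles sparse_in UNIV"
    by (rule uniform_discrete_imp_sparse[OF uniform_discrete_qhz_poles])
qed simp

lemma qhz_term_eq:
  "qhz_term q z s k =
     exp (s * of_real (ln (q - q^2))) * qpow (s * of_nat k) * (1 - qpow (of_nat k + z)) powr (- s)"
proof -
  define w where "w = qpow (of_nat k + z)"
  have "norm w < 1"
    unfolding w_def using Re_z_pos by (intro norm_qpow_less_1) simp
  hence "1 - w \<noteq> 0"
    by auto
  have "qnum q (of_nat k + z) = of_real (1 / (1 - q)) * (1 - w)"
    using q_less_1 by (simp add: qnum_def w_def qpow_def field_simps)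
  hence "Ln (qnum q (of_nat k + z)) = Ln (of_real (1 / (1 - q)) * (1 - w))"
    by (simp only:)
  also have "\<dots> = Ln (of_real (1 / (1 - q))) + Ln (1 - w)"
    using q_less_1 \<open>1 - w \<noteq> 0\<close> by (intro Ln_times_of_real) auto
  also have "Ln (of_real (1 / (1 - q))) = of_real (ln (1 / (1 - q)))"
    using q_less_1 by (intro Ln_of_real) simp
  also have "ln (1 / (1 - q)) = - ln (1 - q)"
    using q_less_1 by (simp add: ln_div)
  finally have Ln_qnum: "Ln (qnum q (of_nat k + z)) = - of_real (ln (1 - q)) + Ln (1 - w)"
    by simp
  have "q - q^2 = q * (1 - q)"
    by (simp add: power2_eq_square algebra_simps)
  hence "ln (q - q^2) = ln q + ln (1 - q)"
    using q_pos q_less_1 by (simp add: ln_mult)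
  hence "s * of_nat (k + 1) * of_real (ln q) - s * Ln (qnum q (of_nat k + z)) =
      s * of_real (ln (q - q^2)) + s * of_nat k * of_real (ln q) + (- s) * Ln (1 - w)"
    unfolding Ln_qnum by (simp add: algebra_simps)
  hence "qhz_term q z s k =
      exp (s * of_real (ln (q - q^2)) + s * of_nat k * of_real (ln q) + (- s) * Ln (1 - w))"
    by (simp add: qhz_term_def flip: exp_diff)
  also have "\<dots> = exp (s * of_real (ln (q - q^2))) * qpow (s * of_nat k) * (1 - w) powr (- s)"
    using \<open>1 - w \<noteq> 0\<close> by (simp only: exp_add qpow_def powr_def) simp
  finally show ?thesis
    unfolding w_def .
qed

lemma qterm_geometric_sums:
  assumes "0 < Re s"
  shows "(\<lambda>k. pochhammer s n / fact n * qpow (of_nat n * z) * qpow (s + of_nat n) ^ k) sums qterm n s"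
proof -
  have "norm (qpow (s + of_nat n)) < 1"
    using assms by (intro norm_qpow_less_1) simp
  from sums_mult[OF geometric_sums[OF this], of "pochhammer s n / fact n * qpow (of_nat n * z)"]
  show ?thesis
    by (simp add: qterm_def field_simps)
qed

lemma qhz_term_binomial_sums:
  "(\<lambda>n. exp (s * of_real (ln (q - q^2))) * (pochhammer s n / fact n * qpow (of_nat n * z) *
      qpow (s + of_nat n) ^ k)) sums qhz_term q z s k"
proof -
  define w where "w = qpow (of_nat k + z)"
  have "norm (- w) < 1"
    unfolding w_def using Re_z_pos by (simp add: norm_qpow_less_1)
  from sums_mult[OF gen_binomial_complex[OF this, of "- s"],
      of "exp (s * of_real (ln (q - q^2))) * qpow (s * of_nat k)"]
  have binomial: "(\<lambda>n. exp (s * of_real (ln (q - q^2))) * qpow (s * of_nat k) *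
      (pochhammer s n / fact n * w ^ n)) sums qhz_term q z s k"
    by (simp add: gbinomial_minus_mult_power qhz_term_eq w_def)
  have eq: "exp (s * of_real (ln (q - q^2))) * qpow (s * of_nat k) * (pochhammer s n / fact n * w ^ n) =
      exp (s * of_real (ln (q - q^2))) * (pochhammer s n / fact n * qpow (of_nat n * z) *
      qpow (s + of_nat n) ^ k)" for n
  proof -
    have "s * of_nat k + of_nat n * (of_nat k + z) = of_nat n * z + of_nat k * (s + of_nat n)"
      by (simp add: algebra_simps)
    hence "qpow (s * of_nat k) * w ^ n = qpow (of_nat n * z) * qpow (s + of_nat n) ^ k"
      unfolding w_def by (metis qpow_add qpow_of_nat_mult)
    thus ?thesis
      by (metis mult.assoc mult.left_commute)
  qed
  show ?thesis
    using binomial unfolding eq .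
qed

lemma qzeta_eq_qHurwitz_zeta:
  assumes "0 < Re s"
  shows "qzeta s = qHurwitz_zeta q z s"
proof -
  define c where "c = exp (s * of_real (ln (q - q^2)))"
  define F where "F n k = c * (pochhammer s n / fact n * qpow (of_nat n * z) * qpow (s + of_nat n) ^ k)"
    for n k
  have rows: "(\<lambda>k. F n k) sums (c * qterm n s)" for n
    unfolding F_def by (rule sums_mult[OF qterm_geometric_sums[OF assms]])
  have cols: "(\<lambda>n. F n k) sums qhz_term q z s k" for k
    unfolding F_def c_def by (rule qhz_term_binomial_sums)
  define a where "a n = norm c * (pochhammer (norm s) n / fact n * norm (qpow z) ^ n)" for n
  define b where "b k = norm (qpow s) ^ k" for k
  have bound: "norm (F n k) \<le> a n * b k" for n k
  proof -
    have "norm (qpow (s + of_nat n)) \<le> norm (qpow s)"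
      using ln_q_neg by (simp add: norm_qpow distrib_right mult_nonneg_nonpos)
    hence "norm (qpow (s + of_nat n)) ^ k \<le> norm (qpow s) ^ k"
      by (simp add: power_mono)
    moreover have "norm (pochhammer s n) \<le> pochhammer (norm s) n"
      by (rule norm_pochhammer_le) simp
    moreover from this have "0 \<le> pochhammer (norm s) n"
      by (rule order_trans[OF norm_ge_zero])
    moreover have "norm (F n k) = norm c * (norm (pochhammer s n) / fact n) * norm (qpow z) ^ n *
        norm (qpow (s + of_nat n)) ^ k"
      by (simp add: F_def norm_mult norm_divide norm_power norm_fact qpow_of_nat_mult)
    ultimately have "norm (F n k) \<le> norm c * (pochhammer (norm s) n / fact n) * norm (qpow z) ^ n *
        norm (qpow s) ^ k"
      by (auto intro!: mult_mono divide_right_mono mult_left_mono mult_nonneg_nonneg)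
    thus ?thesis
      by (simp add: a_def b_def mult_ac)
  qed
  have "summable a"
    unfolding a_def using norm_qpow_less_1[OF Re_z_pos]
    by (intro summable_mult summable_pochhammer_power) simp
  moreover have "summable b"
    unfolding b_def using norm_qpow_less_1[OF assms] by (simp add: summable_geometric)
  moreover have "0 \<le> a n" "0 \<le> b k" for n k
    using order_trans[OF norm_ge_zero norm_pochhammer_le[of s "norm s" n]]
    by (simp_all add: a_def b_def)
  ultimately obtain S where "(\<lambda>n. c * qterm n s) sums S" "(\<lambda>k. qhz_term q z s k) sums S"
    using sums_swap_of_product_bound[OF bound _ _ _ _ rows cols] by blast
  thus ?thesis
    unfolding qzeta_def qHurwitz_zeta_def c_def
    by (metis summable_qterm suminf_mult sums_unique)
qed

lemma qterm_at_0: "0 < m \<Longrightarrow> qterm m 0 = 0"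
  by (simp add: qterm_def pochhammer_0_left)

lemma deriv_qterm_at_0:
  assumes "0 < m"
  shows "deriv (qterm m) 0 = qpow (of_nat m * z) / (of_nat m * (1 - of_real (q ^ m)))"
proof -
  obtain j where m: "m = Suc j"
    using assms by (cases m) auto
  define H where "H s = pochhammer (s + 1) j / fact m * qpow (of_nat m * z) / (1 - qpow (s + of_nat m))"
    for s
  have "qpow (s + of_nat m) \<noteq> 1" if "s \<in> ball 0 1" for s
    using that abs_Re_le_cmod[of s] qpow_shift_eq_1_imp_Re[of s m] assms by auto
  hence "H holomorphic_on ball 0 1"
    unfolding H_def[abs_def] by (intro holomorphic_intros) auto
  hence "(H has_field_derivative deriv H 0) (at 0)"
    by (rule holomorphic_derivI) auto
  hence "((\<lambda>s. s * H s) has_field_derivative H 0) (at 0)"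
    by (auto intro!: derivative_eq_intros)
  moreover have "qterm m = (\<lambda>s. s * H s)"
    by (simp add: fun_eq_iff qterm_def H_def m pochhammer_rec)
  moreover have "H 0 = qpow (of_nat m * z) / (of_nat m * (1 - of_real (q ^ m)))"
    by (simp add: H_def m qpow_of_nat pochhammer_fact[symmetric] fact_Suc field_simps del: of_nat_Suc)
  ultimately show ?thesis
    by (simp add: DERIV_imp_deriv)
qed

lemma deriv_qterm_at_0_geometric_sums:
  "(\<lambda>k. qpow (z + of_nat k) ^ (n + 1) / of_nat (n + 1)) sums deriv (qterm (n + 1)) 0"
proof -
  have "qpow (z + of_nat k) ^ (n + 1) = qpow (of_nat (n + 1) * z) * of_real (q ^ (n + 1)) ^ k" for k
  proof -
    have "of_nat (n + 1) * (z + of_nat k) = of_nat (n + 1) * z + of_nat k * of_nat (n + 1)"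
      by (simp add: algebra_simps)
    thus ?thesis
      by (metis qpow_add qpow_of_nat_mult qpow_of_nat)
  qed
  moreover have "norm (of_real (q ^ (n + 1)) :: complex) < 1"
    using q_pos q_less_1 power_Suc_less_one[of q n] by (simp add: norm_power del: power_Suc)
  from sums_mult[OF geometric_sums[OF this], of "qpow (of_nat (n + 1) * z) / of_nat (n + 1)"]
  have "(\<lambda>k. qpow (of_nat (n + 1) * z) / of_nat (n + 1) * of_real (q ^ (n + 1)) ^ k) sums
      deriv (qterm (n + 1)) 0"
    by (simp add: deriv_qterm_at_0 field_simps del: of_nat_Suc)
  ultimately show ?thesis
    by (simp add: field_simps del: of_nat_Suc)
qed

lemma deriv_qtail_1_at_0: "deriv (qtail 1) 0 = - (\<Sum>k. Ln (1 - qpow (z + of_nat k)))"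
proof -
  define w where "w k = qpow (z + of_nat k)" for k
  define F where "F n k = w k ^ (n + 1) / of_nat (n + 1)" for n k
  have rows: "(\<lambda>k. F n k) sums deriv (qterm (n + 1)) 0" for n
    unfolding F_def w_def by (rule deriv_qterm_at_0_geometric_sums)
  have cols: "(\<lambda>n. F n k) sums - Ln (1 - w k)" for k
  proof -
    have "norm (- w k) < 1"
      unfolding w_def using Re_z_pos by (simp add: norm_qpow_less_1)
    hence "(\<lambda>n. - (w k ^ Suc n) / of_nat (Suc n)) sums Ln (1 - w k)"
      using Ln_series'[of "- w k"] sums_Suc_iff[of "\<lambda>n. - (w k ^ n) / of_nat n"] by simp
    thus ?thesis
      using sums_minus by (fastforce simp: F_def)
  qed
  have bound: "norm (F n k) \<le> norm (qpow z) ^ (n + 1) * q ^ k" for n k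
  proof -
    have "norm (F n k) \<le> norm (w k) ^ (n + 1) / 1"
      unfolding F_def norm_divide norm_power norm_of_nat by (intro frac_le) auto
    also have "norm (w k) = norm (qpow z) * q ^ k"
      using qpow_add[of z "of_nat k"] q_pos by (simp add: w_def norm_mult qpow_of_nat norm_power)
    also have "(norm (qpow z) * q ^ k) ^ (n + 1) / 1 = norm (qpow z) ^ (n + 1) * (q ^ k) ^ (n + 1)"
      by (simp only: power_mult_distrib div_by_1)
    also have "\<dots> \<le> norm (qpow z) ^ (n + 1) * (q ^ k) ^ 1"
      using q_pos q_less_1 by (intro mult_left_mono power_decreasing) (auto simp: power_le_one)
    finally show ?thesis
      by simp
  qed
  obtain S where S: "(\<lambda>n. deriv (qterm (n + 1)) 0) sums S" "(\<lambda>k. - Ln (1 - w k)) sums S"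
    using sums_swap_of_product_bound[OF bound _ _ _ _ rows cols]
      norm_qpow_less_1[OF Re_z_pos] q_pos q_less_1
    by (auto simp: summable_geometric)
  have "(\<lambda>n. deriv (qterm (n + 1)) 0) sums deriv (qtail 1) 0"
    by (rule qtail_series(3)[of "1/2"]) auto
  moreover have "(\<lambda>k. Ln (1 - w k)) sums - S"
    using sums_minus[OF S(2)] by simp
  ultimately show ?thesis
    using sums_unique2[OF _ S(1)] unfolding w_def by (simp add: sums_iff)
qed

lemma qtail_1_taylor_bigo:
  "(\<lambda>s. exp (s * of_real (ln (q - q^2))) * qtail 1 s + (\<Sum>k. Ln (1 - qpow (z + of_nat k))) * s)
     \<in> O[at 0](\<lambda>s. s^2)"
proof -
  define H where "H s = exp (s * of_real (ln (q - q^2))) * qtail 1 s" for s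
  have "H holomorphic_on ball 0 (1/2)"
    unfolding H_def[abs_def] by (intro holomorphic_intros qtail_series(1)) auto
  moreover have "H 0 = 0"
    by (simp add: H_def qtail_def qterm_at_0)
  moreover have "(qtail 1 has_field_derivative deriv (qtail 1) 0) (at 0)"
    by (rule holomorphic_derivI[OF qtail_series(1)[of "1/2"]]) auto
  hence "(H has_field_derivative deriv (qtail 1) 0) (at 0)"
    unfolding H_def[abs_def] using \<open>H 0 = 0\<close> by (auto intro!: derivative_eq_intros simp: H_def)
  hence "deriv H 0 = - (\<Sum>k. Ln (1 - qpow (z + of_nat k)))"
    unfolding deriv_qtail_1_at_0[symmetric] by (rule DERIV_imp_deriv)
  ultimately show ?thesis
    using holomorphic_taylor2_bigo[of H "1/2"] by (simp add: H_def)
qed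

lemma qzeta_laurent_at_0:
  "(\<lambda>s. qzeta s - (of_real (- 1 / ln q) / s + of_real (1/2 - ln (q - q^2) / ln q)
     + s * (of_real (- (1/12) * ln q + (1/2) * ln (q - q^2) - (1/2) * (ln (q - q^2))^2 / ln q)
            - (\<Sum>k. Ln (1 - qpow (z + of_nat k))))))
   \<in> O[at 0](\<lambda>s. s^2)"
proof -
  define a where "a = complex_of_real (ln (q - q^2))"
  define l where "l = complex_of_real (ln q)"
  define S where "S = (\<Sum>k. Ln (1 - qpow (z + of_nat k)))"
  have "l \<noteq> 0"
    using ln_q_neg by (simp add: l_def)
  have "\<forall>\<^sub>F s in at 0. qzeta s - (of_real (- 1 / ln q) / s + of_real (1/2 - ln (q - q^2) / ln q)
      + s * (of_real (- (1/12) * ln q + (1/2) * ln (q - q^2) - (1/2) * (ln (q - q^2))^2 / ln q) - S)) =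
    (exp (a * s) / (1 - exp (l * s)) -
      (- 1 / (l * s) + (1/2 - a / l) + (- l / 12 + a / 2 - a^2 / (2 * l)) * s)) +
    (exp (s * a) * qtail 1 s + S * s)" (is "\<forall>\<^sub>F s in at 0. ?lhs s = ?rhs s")
    unfolding eventually_at_filter
  proof (rule always_eventually, intro allI impI)
    fix s :: complex assume "s \<noteq> 0"
    have "qzeta s = exp (a * s) / (1 - exp (l * s)) + exp (s * a) * qtail 1 s"
      using qzeta_split[of s 1] by (simp add: a_def l_def qterm_def qpow_def distrib_left mult.commute)
    thus "?lhs s = ?rhs s"
      using \<open>s \<noteq> 0\<close> \<open>l \<noteq> 0\<close> by (simp add: a_def l_def field_simps)
  qed
  from landau_o.big.in_cong[OF this]
    sum_in_bigo(1)[OF exp_quotient_laurent_bigo[OF \<open>l \<noteq> 0\<close>] qtail_1_taylor_bigo[folded a_def S_def]]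
  show ?thesis
    by (simp add: S_def)
qed

end

theorem proposition1:
  fixes q :: real and z :: complex
  assumes q0: "0 < q" and q1: "q < 1" and hz: "Re z > 0"
  defines "\<delta> \<equiv> 2 * pi * \<i> / of_real (ln q)"
  defines "P \<equiv> {s. \<exists>r::nat. \<exists>l::int. s = - of_nat r + \<delta> * of_int l}"
  defines "am1 \<equiv> - 1 / ln q"
  defines "a0 \<equiv> 1/2 - ln (q - q^2) / ln q"
  defines "a1 \<equiv> - (1/12) * ln q + (1/2) * ln (q - q^2) - (1/2) * (ln (q - q^2))^2 / ln q"
  shows "\<exists>F :: complex \<Rightarrow> complex.
           F meromorphic_on UNIV \<and>
           F holomorphic_on (- P) \<and>
           (\<forall>s. Re s > 0 \<longrightarrow> F s = qHurwitz_zeta q z s) \<and>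
           (\<forall>p\<in>P. is_pole F p \<and> zorder F p = -1) \<and>
           (\<lambda>s. F s - (of_real am1 / s + of_real a0
                  + s * (of_real a1 - (\<Sum>k. Ln (1 - exp ((z - 1 + of_nat (Suc k)) * of_real (ln q)))))))
             \<in> O[at 0](\<lambda>s. s^2)"
proof -
  interpret q_hurwitz q z
    using q0 q1 hz by unfold_locales
  have P_eq: "P = qhz_poles"
    by (simp add: P_def \<delta>_def qhz_poles_def qperiod_def)
  have "(\<Sum>k. Ln (1 - exp ((z - 1 + of_nat (Suc k)) * of_real (ln q)))) =
      (\<Sum>k. Ln (1 - qpow (z + of_nat k)))"
    by (simp add: qpow_def add.commute)
  hence laurent: "(\<lambda>s. qzeta s - (of_real am1 / s + of_real a0
      + s * (of_real a1 - (\<Sum>k. Ln (1 - exp ((z - 1 + of_nat (Suc k)) * of_real (ln q)))))))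
    \<in> O[at 0](\<lambda>s. s^2)"
    using qzeta_laurent_at_0 by (simp add: am1_def a0_def a1_def)
  show ?thesis
    using meromorphic_qzeta holomorphic_qzeta qzeta_eq_qHurwitz_zeta qzeta_simple_pole laurent
    unfolding P_eq by (intro exI[of _ qzeta]) (auto simp: qhz_poles_def)
qed

end
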